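(* Let $k\ge1$ and let $\tilde a>0$, $b>0$. Suppose $\mathbf{x}=(x_1,x_2,x_3)\in(0,\infty)^3$ solves $$x_1=\tilde a\frac{b x_3^k+1}{x_3^k+b},\qquad x_2=\tilde a\frac{(b x_2^k+1)x_3^k}{(x_3^k+b)x_1^k},\qquad x_3=\tilde a\frac{(b x_3^k+1)x_1^k}{(x_2^k+b)x_3^k}.$$ Then $x_1=x_2=x_3$ if and only if at least one of $x_1=x_2$, $x_1=x_3$, $x_2=x_3$ holds.
   Context: In the paper, $\tilde a=e^{2\beta J/k}$ and $b=e^{2\beta J_p}$. The system describes translation-invariant boundary fields for the Ising–Vannimenus model on the Cayley tree of order $k$. *)

theory Defs
  imports Complex_Main
begin

end

theory Submission
  imports Defs
begin

text \<open>Clearing denominators and writing \<open>u\<^sub>i = x\<^sub>i ^ k\<close>, the system becomes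
  \<open>x\<^sub>1 (u\<^sub>3 + b) = a (b u\<^sub>3 + 1)\<close>, \<open>x\<^sub>2 (u\<^sub>3 + b) u\<^sub>1 = a (b u\<^sub>2 + 1) u\<^sub>3\<close> and
  \<open>x\<^sub>3 (u\<^sub>2 + b) u\<^sub>3 = a (b u\<^sub>3 + 1) u\<^sub>1\<close>. Each single coincidence \<open>x\<^sub>i = x\<^sub>j\<close>, i.e.
  \<open>u\<^sub>i = u\<^sub>j\<close>, collapses two of these equations into a linear relation forcing the
  third power to agree as well; since \<open>t \<mapsto> t ^ k\<close> is injective on positive reals,
  all three coordinates coincide.\<close>

lemma eq_of_bilinear_cross_relation:
  fixes b u v :: "'a :: comm_ring_1"
  assumes "(b * v + 1) * u = (b * u + 1) * v"
  shows "u = v"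
  using assms by (simp add: algebra_simps)

lemma eq_of_swapped_proportions:
  fixes K M u v :: "'a :: idom"
  assumes "K * u = M * v" and "K * v = M * u" and "K + M \<noteq> 0"
  shows "u = v"
proof -
  have "(K + M) * (u - v) = 0"
    using assms(1,2) by (simp add: algebra_simps)
  then show ?thesis
    using assms(3) by simp
qed

theorem proposition4p1:
  fixes k :: nat and a b x1 x2 x3 :: real
  assumes "k \<ge> 1" and "a > 0" and "b > 0"
    and "x1 > 0" and "x2 > 0" and "x3 > 0"
    and "x1 = a * (b * x3 ^ k + 1) / (x3 ^ k + b)"
    and "x2 = a * ((b * x2 ^ k + 1) * x3 ^ k) / ((x3 ^ k + b) * x1 ^ k)"
    and "x3 = a * ((b * x3 ^ k + 1) * x1 ^ k) / ((x2 ^ k + b) * x3 ^ k)"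
  shows "(x1 = x2 \<and> x2 = x3) \<longleftrightarrow> (x1 = x2 \<or> x1 = x3 \<or> x2 = x3)"
proof -
  define u1 u2 u3 where "u1 = x1 ^ k" and "u2 = x2 ^ k" and "u3 = x3 ^ k"
  have pos: "u1 > 0" "u2 > 0" "u3 > 0"
    using assms(4-6) by (simp_all add: u1_def u2_def u3_def)
  have inj: "x ^ k = y ^ k \<longleftrightarrow> x = y" if "x > 0" "y > 0" for x y :: real
    using power_eq_iff_eq_base[of k x y] assms(1) that by simp
  have "x1 = a * (b * u3 + 1) / (u3 + b)"
    and "x2 = a * ((b * u2 + 1) * u3) / ((u3 + b) * u1)"
    and "x3 = a * ((b * u3 + 1) * u1) / ((u2 + b) * u3)"
    using assms(7-9) by (simp_all only: u1_def u2_def u3_def)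
  moreover have "u3 + b \<noteq> 0" "(u3 + b) * u1 \<noteq> 0" "(u2 + b) * u3 \<noteq> 0"
    using assms(3) pos by (simp_all add: add_pos_pos)
  ultimately have e1: "x1 * (u3 + b) = a * (b * u3 + 1)"
    and e2: "x2 * (u3 + b) * u1 = a * (b * u2 + 1) * u3"
    and e3: "x3 * (u2 + b) * u3 = a * (b * u3 + 1) * u1"
    by (simp_all add: eq_divide_eq mult.assoc)
  have "x1 = x3" if "x1 = x2"
  proof -
    have "u1 = u2"
      using that by (simp add: u1_def u2_def)
    have "a * ((b * u3 + 1) * u1) = x1 * (u3 + b) * u1"
      using e1 by simp
    also have "\<dots> = a * ((b * u1 + 1) * u3)"
      using e2 that \<open>u1 = u2\<close> by (simp add: mult.assoc)
    finally have "(b * u3 + 1) * u1 = (b * u1 + 1) * u3"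
      using assms(2) by simp
    then have "u1 = u3"
      by (rule eq_of_bilinear_cross_relation)
    then show ?thesis
      using inj assms(4,6) by (simp add: u1_def u3_def)
  qed
  moreover have "x2 = x3" if "x1 = x3"
  proof -
    have "u1 = u3"
      using that by (simp add: u1_def u3_def)
    have "(x1 * u1) * (u2 + b) = a * (b * u1 + 1) * u1"
      using e3 that \<open>u1 = u3\<close> by (simp add: ac_simps)
    also have "\<dots> = (x1 * u1) * (u3 + b)"
      using e1 \<open>u1 = u3\<close> by (simp add: ac_simps)
    finally have "u2 = u3"
      using assms(4) pos by simp
    then show ?thesis
      using inj assms(5,6) by (simp add: u2_def u3_def)
  qed
  moreover have "x1 = x2" if "x2 = x3"
  proof -
    have "u2 = u3"
      using that by (simp add: u2_def u3_def)
    have "(x2 * (u2 + b)) * u1 = (a * (b * u2 + 1)) * u2"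
      and "(x2 * (u2 + b)) * u2 = (a * (b * u2 + 1)) * u1"
      using e2 e3 that \<open>u2 = u3\<close> by (simp_all add: algebra_simps)
    moreover have "x2 * (u2 + b) + a * (b * u2 + 1) > 0"
      using assms(2,3,5) pos by (intro add_pos_pos mult_pos_pos) simp_all
    then have "x2 * (u2 + b) + a * (b * u2 + 1) \<noteq> 0"
      by simp
    ultimately have "u1 = u2"
      by (rule eq_of_swapped_proportions)
    then show ?thesis
      using inj assms(4,5) by (simp add: u1_def u2_def)
  qed
  ultimately show ?thesis
    by blast
qed

end
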